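(* Let $f$ be convex, continuously differentiable, with minimizer $x^*$, minimum value $f^*$ and coordinate-wise Lipschitz constants $L_i>0$, and fix $\alpha\ge0$. Assume $\sigma_{1-\alpha}>0$ (defined with respect to the $\tilde L$-weighted norm below). Fix $x_0\in\mathbb{R}^n$ and put $\theta=\sqrt{\sigma_{1-\alpha}/(2\tilde S_\alpha n)}$, $\zeta_0=\sigma_{1-\alpha}$, $v_0=x_0$, $\phi_0(x)=f(x_0)+\frac{\sigma_{1-\alpha}}{2}\|x-x_0\|_{1-\alpha}^2$. Construct $\phi_k,\zeta_k,v_k$ by the recursion $\zeta_{k+1}=(1-\theta)\zeta_k+\theta\sigma_{1-\alpha}$ (so $\zeta_k=\sigma_{1-\alpha}$), $v_{k+1}=\frac{1}{\zeta_{k+1}}\big[(1-\theta)\zeta_kv_k+\theta\sigma_{1-\alpha}y_k-\frac{\tilde S_\alpha\theta}{\tilde L_{i_k}}\vec f_{i_k}(y_k)\big]$, where $i_0,i_1,\dots$ are independent with $\Pr[i_k=i]=\tilde L_i^\alpha/\tilde S_\alpha$, $y_0=x_0$, and for $k\ge1$ $$x_k=y_{k-1}-\tfrac{1}{\tilde L_{i_{k-1}}}\vec f_{i_{k-1}}(y_{k-1}),\qquad y_k\ \text{ determined by }\ \tfrac{\theta\zeta_k}{\zeta_{k+1}}(v_k-y_k)+x_k-y_k=0.$$ Then for all $k\ge0$, $$\mathbb{E}[f(x_k)]-f^*\le\Big(1-\tfrac12\sqrt{\tfrac{\sigma_{1-\alpha}}{S_\alpha n}}\Big)^k\Big(f(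x_0)-f^*+\sigma_{1-\alpha}\|x^*-x_0\|_{1-\alpha}^2\Big).$$
   Context: $f_i(x)=e_i^T\nabla f(x)$, $\vec f_i(x)=f_i(x)e_i$; $L_i$ are coordinate-wise Lipschitz constants: $|f_i(x+te_i)-f_i(x)|\le L_i|t|$. $S_\alpha=\sum_iL_i^\alpha$. Define $\tilde L_i$ by $\tilde L_i^\alpha=\max(L_i^\alpha,S_\alpha/n)$ (for $\alpha=0$, $\tilde L_i=L_i$) and $\tilde S_\alpha=\sum_i\tilde L_i^\alpha$; the $\tilde L_i$ are again coordinate-wise Lipschitz constants and $S_\alpha\le\tilde S_\alpha\le2S_\alpha$. In this statement $\|x\|_{1-\alpha}=\sqrt{\sum_i\tilde L_i^{1-\alpha}x_i^2}$ (for $\alpha=1$ this is the Euclidean norm), and $\sigma_{1-\alpha}$ is a convexity parameter of $f$ with respect to it: $f(y)\ge f(x)+\langle\nabla f(x),y-x\rangle+\frac{\sigma_{1-\alpha}}2\|y-x\|_{1-\alpha}^2$ for all $x,y$. *)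

theory Defs
  imports "HOL-Analysis.Analysis"
begin

text \<open>Coordinates are indexed by a finite type 'n, so vectors live in real^'n and n = CARD('n).
  The gradient of f is given as a vector field g.\<close>

definition S_alpha :: "real \<Rightarrow> ('n::finite \<Rightarrow> real) \<Rightarrow> real" where
  "S_alpha \<alpha> L = (\<Sum>i\<in>UNIV. L i powr \<alpha>)"

definition L_tilde :: "real \<Rightarrow> ('n::finite \<Rightarrow> real) \<Rightarrow> 'n \<Rightarrow> real" where
  "L_tilde \<alpha> L i = (if \<alpha> = 0 then L i
     else (max (L i powr \<alpha>) (S_alpha \<alpha> L / real CARD('n))) powr (1 / \<alpha>))"

definition S_tilde :: "real \<Rightarrow> ('n::finite \<Rightarrow> real) \<Rightarrow> real" where
  "S_tilde \<alpha> L = (\<Sum>i\<in>UNIV. L_tilde \<alpha> L i powr \<alpha>)"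

definition wnorm :: "real \<Rightarrow> ('n::finite \<Rightarrow> real) \<Rightarrow> real^'n \<Rightarrow> real" where
  "wnorm \<alpha> L x = sqrt (\<Sum>i\<in>UNIV. L_tilde \<alpha> L i powr (1 - \<alpha>) * (x $ i)\<^sup>2)"

definition theta_acd :: "real \<Rightarrow> ('n::finite \<Rightarrow> real) \<Rightarrow> real \<Rightarrow> real" where
  "theta_acd \<alpha> L \<sigma> = sqrt (\<sigma> / (2 * S_tilde \<alpha> L * real CARD('n)))"

fun zeta_acd :: "real \<Rightarrow> ('n::finite \<Rightarrow> real) \<Rightarrow> real \<Rightarrow> nat \<Rightarrow> real" where
  "zeta_acd \<alpha> L \<sigma> 0 = \<sigma>"
| "zeta_acd \<alpha> L \<sigma> (Suc k) =
     (1 - theta_acd \<alpha> L \<sigma>) * zeta_acd \<alpha> L \<sigma> k + theta_acd \<alpha> L \<sigma> * \<sigma>"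

text \<open>State (x_k, y_k, v_k) of the accelerated coordinate descent method, driven by the
  index sequence I (I k = i_k).  y_{k} is the unique solution of
  (theta zeta_k / zeta_{k+1}) (v_k - y) + x_k - y = 0, i.e. y = (c v_k + x_k)/(1+c).\<close>
fun acd :: "real \<Rightarrow> ('n::finite \<Rightarrow> real) \<Rightarrow> real \<Rightarrow> (real^'n \<Rightarrow> real^'n) \<Rightarrow> real^'n
             \<Rightarrow> (nat \<Rightarrow> 'n) \<Rightarrow> nat \<Rightarrow> (real^'n) \<times> (real^'n) \<times> (real^'n)" where
  "acd \<alpha> L \<sigma> g x0 I 0 = (x0, x0, x0)"
| "acd \<alpha> L \<sigma> g x0 I (Suc k) =
     (let (x, y, v) = acd \<alpha> L \<sigma> g x0 I k;
          i = I k;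
          \<theta> = theta_acd \<alpha> L \<sigma>;
          Lt = L_tilde \<alpha> L;
          \<zeta> = zeta_acd \<alpha> L \<sigma>;
          x' = y - ((1 / Lt i) * (g y $ i)) *\<^sub>R axis i 1;
          v' = (1 / \<zeta> (Suc k)) *\<^sub>R
                 (((1 - \<theta>) * \<zeta> k) *\<^sub>R v + (\<theta> * \<sigma>) *\<^sub>R y
                  - (S_tilde \<alpha> L * \<theta> / Lt i * (g y $ i)) *\<^sub>R axis i 1);
          c = \<theta> * \<zeta> (Suc k) / \<zeta> (Suc (Suc k));
          y' = (1 / (1 + c)) *\<^sub>R (c *\<^sub>R v' + x')
      in (x', y', v'))"

definition x_acd where "x_acd \<alpha> L \<sigma> g x0 I k = fst (acd \<alpha> L \<sigma> g x0 I k)"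

text \<open>E[f(x_k)] for i_0,...,i_{k-1} i.i.d. with Pr[i_j = i] = tilde L_i^alpha / tilde S_alpha.\<close>
definition expected_f_acd where
  "expected_f_acd \<alpha> L \<sigma> g x0 f k =
     (\<Sum>I\<in>Pi\<^sub>E {..<k} (\<lambda>_. UNIV).
        (\<Prod>j<k. L_tilde \<alpha> L (I j) powr \<alpha> / S_tilde \<alpha> L) * f (x_acd \<alpha> L \<sigma> g x0 I k))"

end

theory Submission
  imports Defs
begin

text \<open>The potential \<Psi>_k = f(x_k) - f* + \<sigma>/2 \<parallel>v_k - x*\<parallel>^2 contracts by the factor 1 - \<theta> in
  conditional expectation.  Since \<zeta>_k = \<sigma>, a step along coordinate i moves x by a coordinate
  gradient step, which decreases f by at least f_i(y)^2/(2 L~_i), and changes the weighted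
  distance of v to x* by an exactly computable amount; because \<theta>^2 = \<sigma>/(2 S~ n) and
  L~_i^\<alpha> \<ge> S~/(2n), the decrease of f pays for the quadratic part of that change.  Averaging
  over i with weights L~_i^\<alpha>/S~ leaves f(y) + \<sigma>/2 \<parallel>a\<parallel>^2 - \<theta> \<langle>\<nabla>f(y), a\<rangle> with
  a = (1-\<theta>) v + \<theta> y - x*.  The coupling y - x = \<theta> (v - y), strong convexity at y towards x* and
  convexity at y towards x bound this by (1-\<theta>) \<Psi>_k + f*.  Finally S~ \<le> 2 S gives
  \<theta> \<ge> 1/2 sqrt(\<sigma>/(S n)), and \<Psi>_0 is at most f(x_0) - f* + \<sigma> \<parallel>x* - x_0\<parallel>^2.\<close>

lemma coordinate_descent:
  fixes f :: "real^'n \<Rightarrow> real" and g :: "real^'n \<Rightarrow> real^'n"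
  assumes grad: "\<And>x. (f has_derivative (\<lambda>h. g x \<bullet> h)) (at x)"
    and Lip: "\<And>x t. \<bar>g (x + t *\<^sub>R axis i 1) $ i - g x $ i\<bar> \<le> Li * \<bar>t\<bar>"
  shows "f (x + t *\<^sub>R axis i 1) \<le> f x + t * g x $ i + Li / 2 * t\<^sup>2"
proof -
  define \<psi> where "\<psi> s = f (x + s *\<^sub>R axis i 1) - s * g x $ i - Li / 2 * s\<^sup>2" for s
  have line: "((\<lambda>s. f (x + s *\<^sub>R axis i 1)) has_real_derivative g (x + s *\<^sub>R axis i 1) $ i) (at s)"
    for s
  proof -
    have "((\<lambda>s. x + s *\<^sub>R axis i (1::real)) has_derivative (\<lambda>h. h *\<^sub>R axis i 1)) (at s)"
      by (auto intro!: derivative_eq_intros)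
    from has_derivative_compose[OF this grad]
    show ?thesis by (simp add: o_def has_field_derivative_def inner_axis mult_commute_abs)
  qed
  have \<psi>': "(\<psi> has_real_derivative (g (x + s *\<^sub>R axis i 1) $ i - g x $ i - Li * s)) (at s)" for s
    unfolding \<psi>_def by (auto intro!: derivative_eq_intros line)
  have "\<psi> t \<le> \<psi> 0"
  proof (cases "t \<ge> 0")
    case True
    show ?thesis
    proof (rule DERIV_nonpos_imp_nonincreasing[OF True])
      fix s assume "0 \<le> s" "s \<le> t"
      then show "\<exists>d. DERIV \<psi> s :> d \<and> d \<le> 0"
        using \<psi>' Lip[of x s] by fastforce
    qed
  next
    case False
    have "\<exists>d. DERIV \<psi> s :> d \<and> d \<ge> 0" if "t \<le> s" "s \<le> 0" for s
      using \<psi>' Lip[of x s] that by fastforce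
    then show ?thesis using DERIV_nonneg_imp_nondecreasing[of t 0 \<psi>] False by auto
  qed
  then show ?thesis unfolding \<psi>_def by simp
qed

lemma S_alpha_pos:
  assumes "\<And>i. L i > 0"
  shows "S_alpha \<alpha> L > 0"
  unfolding S_alpha_def using assms by (intro sum_pos) (auto simp: less_imp_neq[symmetric])

lemma L_tilde_powr:
  fixes L :: "'n::finite \<Rightarrow> real"
  assumes Lpos: "\<And>i. L i > 0" and alpha: "\<alpha> \<ge> 0"
  shows "L_tilde \<alpha> L i powr \<alpha> = max (L i powr \<alpha>) (S_alpha \<alpha> L / CARD('n))"
proof (cases "\<alpha> = 0")
  case True
  have "S_alpha \<alpha> L = CARD('n)"
    using True Lpos by (simp add: S_alpha_def less_imp_neq[symmetric])
  then show ?thesis using True Lpos[of i] by (simp add: L_tilde_def)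
next
  case False
  have "max (L i powr \<alpha>) (S_alpha \<alpha> L / CARD('n)) > 0"
    using S_alpha_pos[of L \<alpha>, OF Lpos] Lpos[of i] by (simp add: max_def)
  then show ?thesis using False alpha by (simp add: L_tilde_def powr_powr)
qed

lemma L_le_L_tilde:
  assumes Lpos: "\<And>i. L i > 0" and alpha: "\<alpha> \<ge> 0"
  shows "L i \<le> L_tilde \<alpha> L i"
proof (cases "\<alpha> = 0")
  case False
  have "L i = (L i powr \<alpha>) powr (1 / \<alpha>)"
    using False Lpos[of i] by (simp add: powr_powr)
  also have "\<dots> \<le> L_tilde \<alpha> L i"
    using False alpha Lpos[of i] by (auto simp: L_tilde_def intro!: powr_mono2)
  finally show ?thesis .
qed (simp add: L_tilde_def)

lemma L_tilde_pos:
  assumes "\<And>i. L i > 0" and "\<alpha> \<ge> 0"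
  shows "L_tilde \<alpha> L i > 0"
  using L_le_L_tilde[of L \<alpha> i, OF assms] assms(1)[of i] by linarith

lemma S_tilde_pos:
  assumes "\<And>i. L i > 0" and "\<alpha> \<ge> 0"
  shows "S_tilde \<alpha> L > 0"
proof -
  have "L_tilde \<alpha> L i \<noteq> 0" for i
    using L_tilde_pos[of L \<alpha> i, OF assms] by simp
  then show ?thesis unfolding S_tilde_def by (intro sum_pos) auto
qed

lemma S_tilde_le_S_alpha:
  fixes L :: "'n::finite \<Rightarrow> real"
  assumes Lpos: "\<And>i. L i > 0" and alpha: "\<alpha> \<ge> 0"
  shows "S_tilde \<alpha> L \<le> 2 * S_alpha \<alpha> L"
proof -
  have "S_tilde \<alpha> L \<le> (\<Sum>i\<in>UNIV. L i powr \<alpha> + S_alpha \<alpha> L / CARD('n))"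
    unfolding S_tilde_def L_tilde_powr[OF assms]
    using S_alpha_pos[of L \<alpha>, OF Lpos] by (intro sum_mono) auto
  also have "\<dots> = 2 * S_alpha \<alpha> L"
    by (simp add: sum.distrib S_alpha_def)
  finally show ?thesis .
qed

lemma L_tilde_powr_ge:
  fixes L :: "'n::finite \<Rightarrow> real"
  assumes "\<And>i. L i > 0" and "\<alpha> \<ge> 0"
  shows "S_tilde \<alpha> L / (2 * CARD('n)) \<le> L_tilde \<alpha> L i powr \<alpha>"
proof -
  have "S_tilde \<alpha> L / (2 * CARD('n)) \<le> S_alpha \<alpha> L / CARD('n)"
    using S_tilde_le_S_alpha[of L \<alpha>, OF assms] by (simp add: field_simps)
  then show ?thesis unfolding L_tilde_powr[OF assms] by linarith
qed

lemma L_tilde_powr_le_S_tilde: "L_tilde \<alpha> L i powr \<alpha> \<le> S_tilde \<alpha> L"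
  unfolding S_tilde_def by (rule member_le_sum) auto

lemma wnorm_sq: "(wnorm \<alpha> L z)\<^sup>2 = (\<Sum>j\<in>UNIV. L_tilde \<alpha> L j powr (1 - \<alpha>) * (z $ j)\<^sup>2)"
  unfolding wnorm_def by (rule real_sqrt_pow2) (auto intro!: sum_nonneg)

lemma wnorm_minus_commute: "wnorm \<alpha> L (a - b) = wnorm \<alpha> L (b - a)"
  unfolding wnorm_def by (simp add: power2_commute)

lemma wnorm_sq_minus_axis:
  "(wnorm \<alpha> L (a - c *\<^sub>R axis i 1))\<^sup>2
     = (wnorm \<alpha> L a)\<^sup>2 - 2 * c * L_tilde \<alpha> L i powr (1 - \<alpha>) * a $ i
       + c\<^sup>2 * L_tilde \<alpha> L i powr (1 - \<alpha>)"
proof -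
  let ?w = "\<lambda>j. L_tilde \<alpha> L j powr (1 - \<alpha>)"
  have "?w j * ((a - c *\<^sub>R axis i 1) $ j)\<^sup>2
      = ?w j * (a $ j)\<^sup>2 + (if j = i then c\<^sup>2 * ?w i - 2 * c * ?w i * a $ i else 0)" for j
    by (auto simp: axis_def power2_eq_square algebra_simps)
  then show ?thesis
    unfolding wnorm_sq by (simp add: sum.distrib)
qed

lemma wnorm_sq_axis: "(wnorm \<alpha> L (axis i 1))\<^sup>2 = L_tilde \<alpha> L i powr (1 - \<alpha>)"
  using wnorm_sq_minus_axis[of \<alpha> L 0 "-1" i] by (simp add: wnorm_def)

lemma wnorm_sq_convex:
  assumes "0 \<le> t" "t \<le> 1"
  shows "(wnorm \<alpha> L ((1 - t) *\<^sub>R u + t *\<^sub>R z))\<^sup>2 \<le> (1 - t) * (wnorm \<alpha> L u)\<^sup>2 + t * (wnorm \<alpha> L z)\<^sup>2"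
proof -
  let ?w = "\<lambda>j. L_tilde \<alpha> L j powr (1 - \<alpha>)"
  have "((1 - t) * a + t * b)\<^sup>2 \<le> (1 - t) * a\<^sup>2 + t * b\<^sup>2" for a b :: real
  proof -
    have "(1 - t) * a\<^sup>2 + t * b\<^sup>2 - ((1 - t) * a + t * b)\<^sup>2 = t * (1 - t) * (a - b)\<^sup>2"
      by (simp add: power2_eq_square algebra_simps)
    then show ?thesis using assms by (smt (verit) mult_nonneg_nonneg zero_le_power2)
  qed
  then have "?w j * (((1 - t) *\<^sub>R u + t *\<^sub>R z) $ j)\<^sup>2
      \<le> ?w j * ((1 - t) * (u $ j)\<^sup>2 + t * (z $ j)\<^sup>2)" for j
    by (intro mult_left_mono) simp_all
  then show ?thesis
    unfolding wnorm_sq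
    by (auto simp: sum_distrib_left sum.distrib[symmetric] algebra_simps intro: sum_mono)
qed

definition seq_expectation :: "('n::finite \<Rightarrow> real) \<Rightarrow> nat \<Rightarrow> ((nat \<Rightarrow> 'n) \<Rightarrow> real) \<Rightarrow> real" where
  "seq_expectation p k h = (\<Sum>I\<in>Pi\<^sub>E {..<k} (\<lambda>_. UNIV). (\<Prod>j<k. p (I j)) * h I)"

lemma seq_expectation_0: "seq_expectation p 0 h = h (\<lambda>_. undefined)"
  unfolding seq_expectation_def by simp

lemma seq_expectation_Suc:
  "seq_expectation p (Suc k) h = seq_expectation p k (\<lambda>J. \<Sum>i\<in>UNIV. p i * h (J(k := i)))"
proof -
  let ?P = "Pi\<^sub>E {..<k} (\<lambda>_. UNIV :: 'a set)"
  have "Pi\<^sub>E {..<Suc k} (\<lambda>_. UNIV) = (\<lambda>(i, J). J(k := i)) ` (UNIV \<times> ?P)"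
    unfolding lessThan_Suc by (rule PiE_insert_eq)
  moreover have "inj_on (\<lambda>(i, J). J(k := i)) (UNIV \<times> ?P)"
    by (rule inj_combinator) simp
  ultimately have "seq_expectation p (Suc k) h
      = (\<Sum>(i, J)\<in>UNIV \<times> ?P. (\<Prod>j<Suc k. p ((J(k := i)) j)) * h (J(k := i)))"
    unfolding seq_expectation_def by (simp add: sum.reindex case_prod_unfold)
  also have "\<dots> = (\<Sum>i\<in>UNIV. \<Sum>J\<in>?P. (\<Prod>j<k. p (J j)) * (p i * h (J(k := i))))"
    unfolding sum.cartesian_product[symmetric] by (simp add: ac_simps)
  also have "\<dots> = seq_expectation p k (\<lambda>J. \<Sum>i\<in>UNIV. p i * h (J(k := i)))"
    unfolding seq_expectation_def by (subst sum.swap) (simp add: sum_distrib_left)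
  finally show ?thesis .
qed

lemma seq_expectation_mono:
  assumes "\<And>i. p i \<ge> 0" "\<And>I. h I \<le> h' I"
  shows "seq_expectation p k h \<le> seq_expectation p k h'"
  unfolding seq_expectation_def using assms by (intro sum_mono mult_left_mono prod_nonneg) auto

lemma seq_expectation_affine:
  assumes "(\<Sum>i\<in>UNIV. p i) = 1"
  shows "seq_expectation p k (\<lambda>I. c * h I + d) = c * seq_expectation p k h + d"
proof -
  have "seq_expectation p k (\<lambda>_. 1) = 1"
    by (induction k) (simp_all add: seq_expectation_0 seq_expectation_Suc assms)
  moreover have "seq_expectation p k (\<lambda>I. c * h I + d)
      = c * seq_expectation p k h + d * seq_expectation p k (\<lambda>_. 1)"
    by (simp add: seq_expectation_def algebra_simps sum.distrib sum_distrib_left)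
  ultimately show ?thesis by simp
qed

lemma inner_coupling:
  fixes w x y v s :: "'a::real_inner"
  assumes "y - x = t *\<^sub>R (v - y)"
  shows "t * (w \<bullet> ((1 - t) *\<^sub>R v + t *\<^sub>R y - s)) = t * (w \<bullet> (y - s)) + (1 - t) * (w \<bullet> (y - x))"
proof -
  have "(1 - t) *\<^sub>R v + t *\<^sub>R y - s = (y - s) + (1 - t) *\<^sub>R (v - y)"
    by (simp add: algebra_simps)
  then have "t * (w \<bullet> ((1 - t) *\<^sub>R v + t *\<^sub>R y - s)) = t * (w \<bullet> (y - s)) + (1 - t) * (t * (w \<bullet> (v - y)))"
    by (simp only: inner_add_right inner_scaleR_right) (simp add: algebra_simps)
  also have "t * (w \<bullet> (v - y)) = w \<bullet> (y - x)"
    unfolding assms by simp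
  finally show ?thesis .
qed

lemma acd_prefix:
  "(\<And>j. j < k \<Longrightarrow> I j = J j) \<Longrightarrow> acd \<alpha> L \<sigma> g x0 I k = acd \<alpha> L \<sigma> g x0 J k"
  by (induction k) (auto simp: Let_def)

lemma zeta_acd_const: "zeta_acd \<alpha> L \<sigma> k = \<sigma>"
  by (induction k) (auto simp: algebra_simps)

locale coordinate_smooth_strongly_convex =
  fixes f :: "real^'n \<Rightarrow> real" and g :: "real^'n \<Rightarrow> real^'n"
    and L :: "'n::finite \<Rightarrow> real" and \<alpha> \<sigma> :: real
  assumes grad: "\<And>x. (f has_derivative (\<lambda>h. g x \<bullet> h)) (at x)"
    and Lpos: "\<And>i. L i > 0"
    and Lip: "\<And>x i t. \<bar>g (x + t *\<^sub>R axis i 1) $ i - g x $ i\<bar> \<le> L i * \<bar>t\<bar>"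
    and alpha: "\<alpha> \<ge> 0"
    and sigma_pos: "\<sigma> > 0"
    and strong: "\<And>x y. f y \<ge> f x + g x \<bullet> (y - x) + \<sigma> / 2 * (wnorm \<alpha> L (y - x))\<^sup>2"
begin

abbreviation "Lt \<equiv> L_tilde \<alpha> L"
abbreviation "St \<equiv> S_tilde \<alpha> L"
abbreviation "\<theta> \<equiv> theta_acd \<alpha> L \<sigma>"

definition prob :: "'n \<Rightarrow> real" where
  "prob i = Lt i powr \<alpha> / St"

lemma Lt_pos: "Lt i > 0"
  using L_tilde_pos[of L \<alpha>] Lpos alpha by blast

lemma St_pos: "St > 0"
  using S_tilde_pos[of L \<alpha>] Lpos alpha by blast

lemma prob_nonneg: "prob i \<ge> 0"
  using St_pos by (simp add: prob_def)

lemma sum_prob: "(\<Sum>i\<in>UNIV. prob i) = 1"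
  using St_pos by (simp add: prob_def sum_divide_distrib[symmetric] S_tilde_def)

lemma L_tilde_weight: "Lt i powr \<alpha> * Lt i powr (1 - \<alpha>) = Lt i"
  using Lt_pos[of i] by (simp add: powr_add[symmetric])

lemma sigma_le_L_tilde_powr: "\<sigma> \<le> Lt i powr \<alpha>"
proof -
  have "f (0 + 1 *\<^sub>R axis i 1) \<le> f 0 + g 0 $ i + L i / 2"
    using coordinate_descent[OF grad Lip, of 0 1] by simp
  moreover have "f 0 + g 0 $ i + \<sigma> / 2 * Lt i powr (1 - \<alpha>) \<le> f (0 + 1 *\<^sub>R axis i 1)"
    using strong[of 0 "axis i 1"] by (simp add: inner_axis wnorm_sq_axis)
  moreover have "L i \<le> Lt i"
    using L_le_L_tilde[of L \<alpha>] Lpos alpha by blast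
  ultimately have "\<sigma> * Lt i powr (1 - \<alpha>) \<le> Lt i" by simp
  then have "Lt i powr \<alpha> * (\<sigma> * Lt i powr (1 - \<alpha>)) \<le> Lt i powr \<alpha> * Lt i"
    by (simp add: mult_left_mono)
  moreover have "Lt i powr \<alpha> * (\<sigma> * Lt i powr (1 - \<alpha>)) = \<sigma> * Lt i"
    by (metis L_tilde_weight mult.left_commute)
  ultimately show ?thesis using Lt_pos[of i] by simp
qed

lemma theta_sq: "\<theta>\<^sup>2 = \<sigma> / (2 * St * CARD('n))"
proof -
  have "0 < 2 * St * CARD('n)" using St_pos by simp
  from divide_pos_pos[OF sigma_pos this] show ?thesis
    unfolding theta_acd_def by (simp add: real_sqrt_pow2)
qed

lemma theta_nonneg: "0 \<le> \<theta>"
  using sigma_pos St_pos by (simp add: theta_acd_def zero_le_divide_iff)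

lemma theta_le_one: "\<theta> \<le> 1"
proof -
  have "\<sigma> \<le> St"
    by (rule order_trans[OF sigma_le_L_tilde_powr L_tilde_powr_le_S_tilde])
  also have "St \<le> 2 * St * CARD('n)"
  proof -
    have "1 \<le> 2 * real CARD('n)"
      using zero_less_card_finite[where 'a='n] by (simp del: zero_less_card_finite)
    from mult_left_mono[OF this less_imp_le[OF St_pos]] show ?thesis by simp
  qed
  finally have "\<theta>\<^sup>2 \<le> 1"
    unfolding theta_sq using St_pos by simp
  then show ?thesis using theta_nonneg by (simp add: power_le_one_iff abs_le_square_iff)
qed

lemma theta_lower_bound: "1/2 * sqrt (\<sigma> / (S_alpha \<alpha> L * CARD('n))) \<le> \<theta>"
proof -
  have "St \<le> 2 * S_alpha \<alpha> L"
    using S_tilde_le_S_alpha[of L \<alpha>] Lpos alpha by blast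
  then have "\<sigma> / (S_alpha \<alpha> L * CARD('n)) / 4 \<le> \<sigma> / (2 * St * CARD('n))"
    using sigma_pos St_pos by (simp add: frac_le)
  then have le: "sqrt (\<sigma> / (S_alpha \<alpha> L * CARD('n)) / 4) \<le> \<theta>"
    unfolding theta_acd_def by (rule real_sqrt_le_mono)
  have half: "sqrt (q / 4) = 1/2 * sqrt q" for q :: real
    unfolding real_sqrt_divide real_sqrt_four by simp
  show ?thesis using le unfolding half by linarith
qed

definition coord_step :: "real^'n \<Rightarrow> 'n \<Rightarrow> real^'n" where
  "coord_step y i = y - ((1 / Lt i) * g y $ i) *\<^sub>R axis i 1"

definition dual_step :: "real^'n \<Rightarrow> real^'n \<Rightarrow> 'n \<Rightarrow> real^'n" where
  "dual_step v y i = (1 / \<sigma>) *\<^sub>R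
     (((1 - \<theta>) * \<sigma>) *\<^sub>R v + (\<theta> * \<sigma>) *\<^sub>R y - (St * \<theta> / Lt i * g y $ i) *\<^sub>R axis i 1)"

lemma coord_step_decrease: "f (coord_step y i) \<le> f y - (g y $ i)\<^sup>2 / (2 * Lt i)"
proof -
  have "f (coord_step y i) \<le> f y - (g y $ i / Lt i) * g y $ i + L i / 2 * (g y $ i / Lt i)\<^sup>2"
    using coordinate_descent[OF grad Lip, of y "- (g y $ i / Lt i)"]
    by (simp add: coord_step_def)
  also have "\<dots> \<le> f y - (g y $ i / Lt i) * g y $ i + Lt i / 2 * (g y $ i / Lt i)\<^sup>2"
    using L_le_L_tilde[of L \<alpha> i] Lpos alpha by (simp add: mult_right_mono)
  also have "\<dots> = f y - (g y $ i)\<^sup>2 / (2 * Lt i)"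
    using Lt_pos[of i] by (simp add: power2_eq_square field_simps)
  finally show ?thesis .
qed

lemma coordinate_step_bound:
  fixes a y :: "real^'n" and i :: 'n
  defines "c \<equiv> St * \<theta> / (\<sigma> * Lt i) * g y $ i"
  shows "prob i * (f (coord_step y i) + \<sigma> / 2 * (wnorm \<alpha> L (a - c *\<^sub>R axis i 1))\<^sup>2)
    \<le> prob i * (f y + \<sigma> / 2 * (wnorm \<alpha> L a)\<^sup>2) - \<theta> * (g y $ i * a $ i)"
proof -
  \<comment> \<open>The linear term of the expanded norm is exactly \<open>\<theta> g_i a_i\<close>; the quadratic one is
    \<open>g_i^2/(4 n L~_i)\<close>, which the coordinate descent decrease covers since \<open>L~_i^\<alpha> \<ge> S~/(2n)\<close>.\<close>
  let ?g = "g y $ i" and ?w = "Lt i powr (1 - \<alpha>)"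
  have lin: "prob i * \<sigma> * c * ?w = \<theta> * ?g"
  proof -
    have "prob i * \<sigma> * c * ?w = (Lt i powr \<alpha> * ?w) * \<theta> * ?g / Lt i"
      using sigma_pos St_pos by (simp add: prob_def c_def field_simps)
    then show ?thesis using Lt_pos[of i] by (simp add: L_tilde_weight)
  qed
  have quad: "prob i * \<sigma> / 2 * c\<^sup>2 * ?w \<le> prob i * (?g\<^sup>2 / (2 * Lt i))"
  proof -
    have "prob i * \<sigma> / 2 * c\<^sup>2 * ?w = \<theta> * ?g * c / 2"
      using lin by (simp add: power2_eq_square ac_simps)
    also have "\<dots> = \<theta>\<^sup>2 * St * ?g\<^sup>2 / (2 * \<sigma> * Lt i)"
      using sigma_pos Lt_pos[of i] by (simp add: c_def power2_eq_square field_simps)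
    also have "\<dots> = St / (2 * CARD('n)) * (?g\<^sup>2 / (2 * St * Lt i))"
      using sigma_pos St_pos Lt_pos[of i] by (simp add: theta_sq field_simps)
    also have "\<dots> \<le> Lt i powr \<alpha> * (?g\<^sup>2 / (2 * St * Lt i))"
      using L_tilde_powr_ge[of L \<alpha> i] Lpos alpha St_pos Lt_pos[of i]
      by (intro mult_right_mono) auto
    also have "\<dots> = prob i * (?g\<^sup>2 / (2 * Lt i))"
      by (simp add: prob_def)
    finally show ?thesis .
  qed
  have "f (coord_step y i) + \<sigma> / 2 * (wnorm \<alpha> L (a - c *\<^sub>R axis i 1))\<^sup>2
    \<le> f y - ?g\<^sup>2 / (2 * Lt i) + \<sigma> / 2 * ((wnorm \<alpha> L a)\<^sup>2 - 2 * c * ?w * a $ i + c\<^sup>2 * ?w)"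
    using coord_step_decrease[of y i] by (simp add: wnorm_sq_minus_axis)
  then have "prob i * (f (coord_step y i) + \<sigma> / 2 * (wnorm \<alpha> L (a - c *\<^sub>R axis i 1))\<^sup>2)
    \<le> prob i * (f y - ?g\<^sup>2 / (2 * Lt i) + \<sigma> / 2 * ((wnorm \<alpha> L a)\<^sup>2 - 2 * c * ?w * a $ i + c\<^sup>2 * ?w))"
    by (rule mult_left_mono[OF _ prob_nonneg])
  also have "\<dots> = prob i * (f y + \<sigma> / 2 * (wnorm \<alpha> L a)\<^sup>2) - (prob i * \<sigma> * c * ?w) * a $ i
      + prob i * \<sigma> / 2 * c\<^sup>2 * ?w - prob i * (?g\<^sup>2 / (2 * Lt i))"
    by (simp add: algebra_simps)
  also have "\<dots> \<le> prob i * (f y + \<sigma> / 2 * (wnorm \<alpha> L a)\<^sup>2) - \<theta> * (?g * a $ i)"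
    using lin quad by simp
  finally show ?thesis .
qed

lemma expected_step_bound:
  fixes v y xstar :: "real^'n"
  defines "a \<equiv> (1 - \<theta>) *\<^sub>R v + \<theta> *\<^sub>R y - xstar"
  shows "(\<Sum>i\<in>UNIV. prob i * (f (coord_step y i) + \<sigma> / 2 * (wnorm \<alpha> L (dual_step v y i - xstar))\<^sup>2))
    \<le> f y + \<sigma> / 2 * (wnorm \<alpha> L a)\<^sup>2 - \<theta> * (g y \<bullet> a)"
proof -
  have dual: "dual_step v y i - xstar = a - (St * \<theta> / (\<sigma> * Lt i) * g y $ i) *\<^sub>R axis i 1" for i
    using sigma_pos by (simp add: dual_step_def a_def vec_eq_iff field_simps)
  have "(\<Sum>i\<in>UNIV. prob i * (f (coord_step y i) + \<sigma> / 2 * (wnorm \<alpha> L (dual_step v y i - xstar))\<^sup>2))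
    \<le> (\<Sum>i\<in>UNIV. prob i * (f y + \<sigma> / 2 * (wnorm \<alpha> L a)\<^sup>2) - \<theta> * (g y $ i * a $ i))"
    unfolding dual by (intro sum_mono coordinate_step_bound)
  also have "\<dots> = f y + \<sigma> / 2 * (wnorm \<alpha> L a)\<^sup>2 - \<theta> * (g y \<bullet> a)"
    by (simp add: sum_subtractf sum_distrib_left[symmetric] sum_distrib_right[symmetric]
                  sum_prob inner_vec_def)
  finally show ?thesis .
qed

lemma coupling_bound:
  fixes x y v xstar :: "real^'n"
  assumes coupling: "y - x = \<theta> *\<^sub>R (v - y)"
  defines "a \<equiv> (1 - \<theta>) *\<^sub>R v + \<theta> *\<^sub>R y - xstar"
  shows "f y + \<sigma> / 2 * (wnorm \<alpha> L a)\<^sup>2 - \<theta> * (g y \<bullet> a)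
    \<le> (1 - \<theta>) * (f x + \<sigma> / 2 * (wnorm \<alpha> L (v - xstar))\<^sup>2) + \<theta> * f xstar"
proof -
  let ?V = "(wnorm \<alpha> L (v - xstar))\<^sup>2" and ?Y = "(wnorm \<alpha> L (y - xstar))\<^sup>2"
  let ?gx = "g y \<bullet> (y - x)" and ?gs = "g y \<bullet> (y - xstar)"
  have "a = (1 - \<theta>) *\<^sub>R (v - xstar) + \<theta> *\<^sub>R (y - xstar)"
    by (simp add: a_def algebra_simps)
  then have "(wnorm \<alpha> L a)\<^sup>2 \<le> (1 - \<theta>) * ?V + \<theta> * ?Y"
    using wnorm_sq_convex[OF theta_nonneg theta_le_one] by simp
  then have "\<sigma> / 2 * (wnorm \<alpha> L a)\<^sup>2 \<le> \<sigma> / 2 * ((1 - \<theta>) * ?V + \<theta> * ?Y)"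
    by (rule mult_left_mono) (use sigma_pos in simp)
  also have "\<dots> = (1 - \<theta>) * (\<sigma> / 2 * ?V) + \<theta> * (\<sigma> / 2 * ?Y)"
    by (simp add: field_simps)
  finally have norm_a: "\<sigma> / 2 * (wnorm \<alpha> L a)\<^sup>2 \<le> (1 - \<theta>) * (\<sigma> / 2 * ?V) + \<theta> * (\<sigma> / 2 * ?Y)" .
  have "f y - ?gs + \<sigma> / 2 * ?Y \<le> f xstar"
    using strong[of y xstar] by (simp add: wnorm_minus_commute inner_diff_right)
  then have optimum: "\<theta> * (f y - ?gs + \<sigma> / 2 * ?Y) \<le> \<theta> * f xstar"
    by (rule mult_left_mono[OF _ theta_nonneg])
  have "0 \<le> \<sigma> / 2 * (wnorm \<alpha> L (x - y))\<^sup>2"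
    using sigma_pos by simp
  then have "f y - ?gx \<le> f x"
    using strong[of y x] by (simp add: inner_diff_right)
  then have current: "(1 - \<theta>) * (f y - ?gx) \<le> (1 - \<theta>) * f x"
    using theta_le_one by (intro mult_left_mono) auto
  have "f y + \<sigma> / 2 * (wnorm \<alpha> L a)\<^sup>2 - \<theta> * (g y \<bullet> a)
      \<le> (1 - \<theta>) * (f y - ?gx) + (1 - \<theta>) * (\<sigma> / 2 * ?V) + \<theta> * (f y - ?gs + \<sigma> / 2 * ?Y)"
    using norm_a unfolding a_def inner_coupling[OF coupling] by (simp add: algebra_simps)
  also have "\<dots> \<le> (1 - \<theta>) * (f x + \<sigma> / 2 * ?V) + \<theta> * f xstar"
    using optimum current by (simp add: distrib_left)
  finally show ?thesis .
qed

lemma acd_Suc_eq: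
  assumes "acd \<alpha> L \<sigma> g x0 I k = (x, y, v)"
  shows "acd \<alpha> L \<sigma> g x0 I (Suc k) =
    (coord_step y (I k),
     (1 / (1 + \<theta>)) *\<^sub>R (\<theta> *\<^sub>R dual_step v y (I k) + coord_step y (I k)),
     dual_step v y (I k))"
proof -
  have "\<theta> * \<sigma> / \<sigma> = \<theta>"
    using sigma_pos by simp
  then show ?thesis
    unfolding acd.simps assms Let_def prod.case zeta_acd_const coord_step_def dual_step_def
    by simp
qed

lemma acd_coupling:
  assumes "acd \<alpha> L \<sigma> g x0 I k = (x, y, v)"
  shows "y - x = \<theta> *\<^sub>R (v - y)"
proof (cases k)
  case 0
  then show ?thesis using assms by auto
next
  case (Suc m)
  obtain x' y' v' where "acd \<alpha> L \<sigma> g x0 I m = (x', y', v')"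
    by (metis prod_cases3)
  from acd_Suc_eq[OF this] have "y = (1 / (1 + \<theta>)) *\<^sub>R (\<theta> *\<^sub>R v + x)"
    using assms unfolding Suc by (simp del: acd.simps)
  then have "(1 + \<theta>) *\<^sub>R y = \<theta> *\<^sub>R v + x"
    using theta_nonneg by simp
  moreover have "y - x - \<theta> *\<^sub>R (v - y) = (1 + \<theta>) *\<^sub>R y - (\<theta> *\<^sub>R v + x)"
    by (simp add: algebra_simps)
  ultimately show ?thesis by simp
qed

definition potential :: "real^'n \<Rightarrow> real^'n \<Rightarrow> (nat \<Rightarrow> 'n) \<Rightarrow> nat \<Rightarrow> real" where
  "potential x0 xstar I k = (case acd \<alpha> L \<sigma> g x0 I k of (x, y, v) \<Rightarrow>
     f x + \<sigma> / 2 * (wnorm \<alpha> L (v - xstar))\<^sup>2 - f xstar)"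

lemma potential_contraction:
  "(\<Sum>i\<in>UNIV. prob i * potential x0 xstar (I(k := i)) (Suc k)) \<le> (1 - \<theta>) * potential x0 xstar I k"
proof -
  obtain x y v where st: "acd \<alpha> L \<sigma> g x0 I k = (x, y, v)"
    by (metis prod_cases3)
  have "acd \<alpha> L \<sigma> g x0 (I(k := i)) k = (x, y, v)" for i
    using st acd_prefix[of k "I(k := i)" I] by simp
  from acd_Suc_eq[OF this]
  have "potential x0 xstar (I(k := i)) (Suc k)
      = f (coord_step y i) + \<sigma> / 2 * (wnorm \<alpha> L (dual_step v y i - xstar))\<^sup>2 - f xstar" for i
    by (simp add: potential_def del: acd.simps)
  then have "(\<Sum>i\<in>UNIV. prob i * potential x0 xstar (I(k := i)) (Suc k))
      = (\<Sum>i\<in>UNIV. prob i * (f (coord_step y i) + \<sigma> / 2 * (wnorm \<alpha> L (dual_step v y i - xstar))\<^sup>2))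
        - f xstar"
    by (simp add: right_diff_distrib sum_subtractf sum_distrib_right[symmetric] sum_prob)
  also have "\<dots> \<le> (1 - \<theta>) * (f x + \<sigma> / 2 * (wnorm \<alpha> L (v - xstar))\<^sup>2) + \<theta> * f xstar - f xstar"
    using order_trans[OF expected_step_bound coupling_bound[OF acd_coupling[OF st]]] by simp
  also have "\<dots> = (1 - \<theta>) * potential x0 xstar I k"
    by (simp add: potential_def st algebra_simps)
  finally show ?thesis .
qed

lemma expected_potential_le:
  "seq_expectation prob k (\<lambda>I. potential x0 xstar I k)
     \<le> (1 - \<theta>) ^ k * (f x0 + \<sigma> / 2 * (wnorm \<alpha> L (x0 - xstar))\<^sup>2 - f xstar)"
proof (induction k)
  case 0
  show ?case by (simp add: seq_expectation_0 potential_def)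
next
  case (Suc k)
  have "seq_expectation prob (Suc k) (\<lambda>I. potential x0 xstar I (Suc k))
      = seq_expectation prob k (\<lambda>I. \<Sum>i\<in>UNIV. prob i * potential x0 xstar (I(k := i)) (Suc k))"
    by (rule seq_expectation_Suc)
  also have "\<dots> \<le> seq_expectation prob k (\<lambda>I. (1 - \<theta>) * potential x0 xstar I k + 0)"
    by (rule seq_expectation_mono[OF prob_nonneg]) (simp add: potential_contraction)
  also have "\<dots> = (1 - \<theta>) * seq_expectation prob k (\<lambda>I. potential x0 xstar I k)"
    by (simp only: seq_expectation_affine[OF sum_prob])
  also have "\<dots> \<le> (1 - \<theta>) ^ Suc k * (f x0 + \<sigma> / 2 * (wnorm \<alpha> L (x0 - xstar))\<^sup>2 - f xstar)"
    using mult_left_mono[OF Suc.IH, of "1 - \<theta>"] theta_le_one by simp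
  finally show ?case .
qed

lemma expected_f_acd_eq:
  "expected_f_acd \<alpha> L \<sigma> g x0 f k = seq_expectation prob k (\<lambda>I. f (x_acd \<alpha> L \<sigma> g x0 I k))"
  by (simp add: expected_f_acd_def seq_expectation_def prob_def)

theorem expected_f_acd_convergence:
  assumes minimizer: "\<And>x. f xstar \<le> f x"
  shows "expected_f_acd \<alpha> L \<sigma> g x0 f k - f xstar
    \<le> (1 - 1/2 * sqrt (\<sigma> / (S_alpha \<alpha> L * CARD('n)))) ^ k
       * (f x0 - f xstar + \<sigma> * (wnorm \<alpha> L (xstar - x0))\<^sup>2)"
proof -
  let ?r = "1 - 1/2 * sqrt (\<sigma> / (S_alpha \<alpha> L * CARD('n)))"
  let ?\<Psi>0 = "f x0 + \<sigma> / 2 * (wnorm \<alpha> L (x0 - xstar))\<^sup>2 - f xstar"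
  have "expected_f_acd \<alpha> L \<sigma> g x0 f k - f xstar
      = seq_expectation prob k (\<lambda>I. 1 * f (x_acd \<alpha> L \<sigma> g x0 I k) + - f xstar)"
    by (simp only: seq_expectation_affine[OF sum_prob] expected_f_acd_eq)
  also have "\<dots> \<le> seq_expectation prob k (\<lambda>I. potential x0 xstar I k)"
    using sigma_pos
    by (intro seq_expectation_mono prob_nonneg) (simp add: potential_def x_acd_def split: prod.split)
  also have "\<dots> \<le> (1 - \<theta>) ^ k * ?\<Psi>0"
    by (rule expected_potential_le)
  also have "\<dots> \<le> ?r ^ k * (f x0 - f xstar + \<sigma> * (wnorm \<alpha> L (xstar - x0))\<^sup>2)"
  proof (rule mult_mono)
    show "(1 - \<theta>) ^ k \<le> ?r ^ k"
      using theta_lower_bound theta_le_one by (intro power_mono) auto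
    show "?\<Psi>0 \<le> f x0 - f xstar + \<sigma> * (wnorm \<alpha> L (xstar - x0))\<^sup>2"
      using sigma_pos by (simp add: wnorm_minus_commute)
    show "0 \<le> ?r ^ k"
      using theta_lower_bound theta_le_one by simp
    have "0 \<le> \<sigma> / 2 * (wnorm \<alpha> L (x0 - xstar))\<^sup>2"
      using sigma_pos by simp
    then show "0 \<le> ?\<Psi>0"
      using minimizer[of x0] by linarith
  qed
  finally show ?thesis .
qed

end

theorem mainTheorem3:
  fixes f :: "real^'n \<Rightarrow> real" and g :: "real^'n \<Rightarrow> real^'n"
    and L :: "'n \<Rightarrow> real" and \<alpha> \<sigma> :: real and xstar x0 :: "real^'n"
  assumes conv: "convex_on UNIV f"
    and grad: "\<And>x. (f has_derivative (\<lambda>h. g x \<bullet> h)) (at x)"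
    and cont: "continuous_on UNIV g"
    and minimizer: "\<And>x. f xstar \<le> f x"
    and Lpos: "\<And>i. L i > 0"
    and Lip: "\<And>x i t. \<bar>g (x + t *\<^sub>R axis i 1) $ i - g x $ i\<bar> \<le> L i * \<bar>t\<bar>"
    and alpha: "\<alpha> \<ge> 0"
    and sigma_pos: "\<sigma> > 0"
    and strong: "\<And>x y. f y \<ge> f x + g x \<bullet> (y - x) + \<sigma> / 2 * (wnorm \<alpha> L (y - x))\<^sup>2"
  shows "\<forall>k. expected_f_acd \<alpha> L \<sigma> g x0 f k - f xstar
           \<le> (1 - 1/2 * sqrt (\<sigma> / (S_alpha \<alpha> L * real CARD('n)))) ^ k
              * (f x0 - f xstar + \<sigma> * (wnorm \<alpha> L (xstar - x0))\<^sup>2)"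
proof -
  interpret coordinate_smooth_strongly_convex f g L \<alpha> \<sigma>
    using grad Lpos Lip alpha sigma_pos strong by unfold_locales
  show ?thesis
    using expected_f_acd_convergence[OF minimizer] by blast
qed

end
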